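(* Let $3\le k\le n$. The subgroup $VS_{k-1}^*$ of $VSPG_k$ is generated by the elements $\mu_{jk}$ for $1\le j\le k-1$ together with all reduced powers of the generators $\mu_{kj}$, $\gamma_{kj}$ and $\gamma_{jk}$ for $1\le j\le k-1$.
   Context: $VSPG_n$ is the group generated by $\{\mu_{ij},\gamma_{ij}\mid 1\le i\ne j\le n\}$ with defining relations (distinct letters denote distinct indices): $\mu_{ij}\mu_{ik}\mu_{jk}=\mu_{jk}\mu_{ik}\mu_{ij}$; $\mu_{ij}\mu_{ik}\gamma_{jk}=\gamma_{jk}\mu_{ik}\mu_{ij}$; $\gamma_{ij}\mu_{ik}\mu_{jk}=\mu_{jk}\mu_{ik}\gamma_{ij}$; $\mu_{ij}\gamma_{ji}=\gamma_{ij}\mu_{ji}$; $\mu_{ij}\mu_{kl}=\mu_{kl}\mu_{ij}$, $\gamma_{ij}\gamma_{kl}=\gamma_{kl}\gamma_{ij}$, $\mu_{ij}\gamma_{kl}=\gamma_{kl}\mu_{ij}$. For $k<n$, $VSPG_k$ is identified with the subgroup of $VSPG_n$ generated by $\mu_{ij},\gamma_{ij}$ with $i,j\le k$. For $2\le i\le n$, $VS_{i-1}$ is the subgroup generated by $\mu_{1i},\dots,\mu_{i-1,i},\mu_{i1},\dots,\mu_{i,i-1},\gamma_{1i},\dots,\gamma_{i-1,i},\gamma_{i1},\dots,\gamma_{i,i-1}$, and $VS_{i-1}^*$ is the normal closure of $VS_{i-1}$ in $VSPG_i$. Notation $a^b:=b^{-1}ab$. Reduced power of $\mu_{kj}$ ($1\le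 j\le k-1$): $\mu_{kj}^{w}$ where $w$ is the empty word or a reduced word (no adjacent mutually inverse letters) in $VSPG_{k-1}$ beginning with a nonzero power of some $\mu_{ij}$ or $\gamma_{ij}$ with $1\le i\le k-1$, $i\ne j$. Reduced powers of $\gamma_{kj},\gamma_{jk}$: $\gamma_{kj}^{w}$, $\gamma_{jk}^{w}$ where $w$ is the empty word or a reduced word in $VSPG_{k-1}$ beginning with a nonzero power of some $\gamma_{ij}$ or $\gamma_{ji}$ with $1\le i\le k-1$, $i\ne j$. *)

theory Defs
  imports "HOL-Algebra.Algebra"
begin

text \<open>Generators: Mu i j stands for mu_ij, Ga i j for gamma_ij.
  A letter is a generator together with a sign (True = the generator, False = its inverse).\<close>

datatype vgen = Mu nat nat | Ga nat nat

type_synonym vletter = "vgen \<times> bool"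
type_synonym vword = "vletter list"

definition flip :: "vletter \<Rightarrow> vletter" where
  "flip x = (fst x, \<not> snd x)"

definition inv_word :: "vword \<Rightarrow> vword" where
  "inv_word w = rev (map flip w)"

fun valid_gen :: "nat \<Rightarrow> vgen \<Rightarrow> bool" where
  "valid_gen m (Mu i j) = (1 \<le> i \<and> i \<le> m \<and> 1 \<le> j \<and> j \<le> m \<and> i \<noteq> j)"
| "valid_gen m (Ga i j) = (1 \<le> i \<and> i \<le> m \<and> 1 \<le> j \<and> j \<le> m \<and> i \<noteq> j)"

definition valid_word :: "nat \<Rightarrow> vword \<Rightarrow> bool" where
  "valid_word m w = (\<forall>x \<in> set w. valid_gen m (fst x))"

definition pos :: "vgen list \<Rightarrow> vword" where
  "pos gs = map (\<lambda>g. (g, True)) gs"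

inductive relator :: "nat \<Rightarrow> vword \<Rightarrow> vword \<Rightarrow> bool" for m where
  r1: "\<lbrakk>distinct [a,b,c]; set [a,b,c] \<subseteq> {1..m}\<rbrakk> \<Longrightarrow>
       relator m (pos [Mu a b, Mu a c, Mu b c]) (pos [Mu b c, Mu a c, Mu a b])"
| r2: "\<lbrakk>distinct [a,b,c]; set [a,b,c] \<subseteq> {1..m}\<rbrakk> \<Longrightarrow>
       relator m (pos [Mu a b, Mu a c, Ga b c]) (pos [Ga b c, Mu a c, Mu a b])"
| r3: "\<lbrakk>distinct [a,b,c]; set [a,b,c] \<subseteq> {1..m}\<rbrakk> \<Longrightarrow>
       relator m (pos [Ga a b, Mu a c, Mu b c]) (pos [Mu b c, Mu a c, Ga a b])"
| r4: "\<lbrakk>distinct [a,b]; set [a,b] \<subseteq> {1..m}\<rbrakk> \<Longrightarrow>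
       relator m (pos [Mu a b, Ga b a]) (pos [Ga a b, Mu b a])"
| r5: "\<lbrakk>distinct [a,b,c,d]; set [a,b,c,d] \<subseteq> {1..m}\<rbrakk> \<Longrightarrow>
       relator m (pos [Mu a b, Mu c d]) (pos [Mu c d, Mu a b])"
| r6: "\<lbrakk>distinct [a,b,c,d]; set [a,b,c,d] \<subseteq> {1..m}\<rbrakk> \<Longrightarrow>
       relator m (pos [Ga a b, Ga c d]) (pos [Ga c d, Ga a b])"
| r7: "\<lbrakk>distinct [a,b,c,d]; set [a,b,c,d] \<subseteq> {1..m}\<rbrakk> \<Longrightarrow>
       relator m (pos [Mu a b, Ga c d]) (pos [Ga c d, Mu a b])"

inductive weq :: "nat \<Rightarrow> vword \<Rightarrow> vword \<Rightarrow> bool" for m where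
  weq_refl: "weq m w w"
| weq_sym: "weq m u v \<Longrightarrow> weq m v u"
| weq_trans: "weq m u v \<Longrightarrow> weq m v w \<Longrightarrow> weq m u w"
| weq_cancel: "valid_gen m (fst x) \<Longrightarrow> weq m (u @ [x, flip x] @ v) (u @ v)"
| weq_rel: "relator m l r \<Longrightarrow> weq m (u @ l @ v) (u @ r @ v)"

definition wclass :: "nat \<Rightarrow> vword \<Rightarrow> vword set" where
  "wclass m w = {v. weq m w v}"

definition VSPG :: "nat \<Rightarrow> vword set monoid" where
  "VSPG m = \<lparr> carrier = {wclass m w | w. valid_word m w},
              monoid.mult = (\<lambda>A B. {v. \<exists>a\<in>A. \<exists>b\<in>B. weq m (a @ b) v}),
              one = wclass m [] \<rparr>"

definition normal_closure :: "('a, 'b) monoid_scheme \<Rightarrow> 'a set \<Rightarrow> 'a set" where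
  "normal_closure G H = \<Inter> {N. normal N G \<and> H \<subseteq> N}"

text \<open>VS_{i-1} as a subgroup of VSPG_i.\<close>
definition VS :: "nat \<Rightarrow> vword set set" where
  "VS i = generate (VSPG i)
     {wclass i [(g, True)] | g j. 1 \<le> j \<and> j \<le> i - 1 \<and>
        g \<in> {Mu j i, Mu i j, Ga j i, Ga i j}}"

definition VS_star :: "nat \<Rightarrow> vword set set" where
  "VS_star i = normal_closure (VSPG i) (VS i)"

definition reduced :: "vword \<Rightarrow> bool" where
  "reduced w = (\<forall>t. Suc t < length w \<longrightarrow> w ! Suc t \<noteq> flip (w ! t))"

definition conj_elt :: "nat \<Rightarrow> vgen \<Rightarrow> vword \<Rightarrow> vword set" where
  "conj_elt k g w = wclass k (inv_word w @ [(g, True)] @ w)"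

definition red_pow_mu :: "nat \<Rightarrow> nat \<Rightarrow> vword set set" where
  "red_pow_mu k j = {conj_elt k (Mu k j) w | w.
      w = [] \<or> (valid_word (k - 1) w \<and> reduced w \<and>
        (\<exists>i. 1 \<le> i \<and> i \<le> k - 1 \<and> i \<noteq> j \<and> fst (hd w) \<in> {Mu i j, Ga i j}))}"

definition red_pow_ga :: "nat \<Rightarrow> vgen \<Rightarrow> nat \<Rightarrow> vword set set" where
  "red_pow_ga k g j = {conj_elt k g w | w.
      w = [] \<or> (valid_word (k - 1) w \<and> reduced w \<and>
        (\<exists>i. 1 \<le> i \<and> i \<le> k - 1 \<and> i \<noteq> j \<and> fst (hd w) \<in> {Ga i j, Ga j i}))}"

end

theory Submission
  imports Defs
begin

text \<open>Let H be the subgroup of VSPG_k generated by the listed elements. Each of them is a conjugate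
  of a generator of VS_{k-1}, so H lies in VS_{k-1}^*; conversely H contains VS_{k-1}, and it remains
  to see that H is normal, i.e. stable under conjugation by single letters. Letters with an index k
  lie in H. Conjugating a reduced power x^w by a letter l of VSPG_{k-1} gives x^{w l^{-1}}, which after
  free cancellation is again a reduced power with the same first letter, unless w is empty. The
  remaining conjugates x^l and x^{l^{-1}} of the generators x of VS_{k-1} are either reduced powers
  themselves or are reached through one defining relation: a relation x y g = g y x, x g y = y g x,
  x z = u v or g x = x g transfers membership in H of the conjugates by g from y (resp. u, v, z)
  to x.\<close>

definition conjugates_in :: "('a, 'b) monoid_scheme \<Rightarrow> 'a set \<Rightarrow> 'a \<Rightarrow> 'a \<Rightarrow> bool" where
  "conjugates_in G H x g \<longleftrightarrow>
     inv\<^bsub>G\<^esub> g \<otimes>\<^bsub>G\<^esub> x \<otimes>\<^bsub>G\<^esub> g \<in> H \<and> g \<otimes>\<^bsub>G\<^esub> x \<otimes>\<^bsub>G\<^esub> inv\<^bsub>G\<^esub> g \<in> H"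

context group
begin

lemma inv_mult_cancel [simp]:
  assumes "x \<in> carrier G" "y \<in> carrier G"
  shows "inv x \<otimes> (x \<otimes> y) = y" "x \<otimes> (inv x \<otimes> y) = y"
  using assms by (simp_all add: m_assoc[symmetric])

lemma conjugates_in_of_braid_outer:
  assumes H: "subgroup H G" and c: "x \<in> carrier G" "y \<in> carrier G" "g \<in> carrier G"
    and rel: "x \<otimes> y \<otimes> g = g \<otimes> y \<otimes> x" and "x \<in> H" "y \<in> H" "conjugates_in G H y g"
  shows "conjugates_in G H x g"
proof -
  have "inv g \<otimes> x \<otimes> g = inv g \<otimes> (x \<otimes> y \<otimes> g) \<otimes> inv (inv g \<otimes> y \<otimes> g)"
    using c by (simp add: m_assoc inv_mult_group)
  also have "\<dots> = y \<otimes> x \<otimes> inv (inv g \<otimes> y \<otimes> g)"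
    using c by (simp add: rel m_assoc[symmetric])
  finally have left: "inv g \<otimes> x \<otimes> g = y \<otimes> x \<otimes> inv (inv g \<otimes> y \<otimes> g)" .
  have "g \<otimes> x \<otimes> inv g = inv (g \<otimes> y \<otimes> inv g) \<otimes> ((g \<otimes> y \<otimes> x) \<otimes> inv g)"
    using c by (simp add: m_assoc inv_mult_group)
  also have "\<dots> = inv (g \<otimes> y \<otimes> inv g) \<otimes> x \<otimes> y"
    using c by (simp add: rel[symmetric] m_assoc)
  finally show ?thesis
    using left assms(6-8) unfolding conjugates_in_def
    by (metis subgroup.m_closed subgroup.m_inv_closed H)
qed

lemma conjugates_in_of_braid_middle:
  assumes H: "subgroup H G" and c: "x \<in> carrier G" "y \<in> carrier G" "g \<in> carrier G"
    and rel: "x \<otimes> g \<otimes> y = y \<otimes> g \<otimes> x" and "x \<in> H" "y \<in> H" "conjugates_in G H y g"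
  shows "conjugates_in G H x g"
proof -
  have "inv g \<otimes> x \<otimes> g = inv g \<otimes> (x \<otimes> g \<otimes> y) \<otimes> inv y"
    using c by (simp add: m_assoc)
  also have "\<dots> = (inv g \<otimes> y \<otimes> g) \<otimes> x \<otimes> inv y"
    using c by (simp add: rel m_assoc)
  finally have left: "inv g \<otimes> x \<otimes> g = (inv g \<otimes> y \<otimes> g) \<otimes> x \<otimes> inv y" .
  have "g \<otimes> x \<otimes> inv g = inv y \<otimes> (y \<otimes> g \<otimes> x) \<otimes> inv g"
    using c by (simp add: m_assoc[symmetric])
  also have "\<dots> = inv y \<otimes> x \<otimes> (g \<otimes> y \<otimes> inv g)"
    using c by (simp add: rel[symmetric] m_assoc)
  finally show ?thesis
    using left assms(6-8) unfolding conjugates_in_def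
    by (metis subgroup.m_closed subgroup.m_inv_closed H)
qed

lemma conjugates_in_of_mult_eq:
  assumes H: "subgroup H G"
    and c: "x \<in> carrier G" "u \<in> carrier G" "v \<in> carrier G" "z \<in> carrier G" "g \<in> carrier G"
    and rel: "x \<otimes> z = u \<otimes> v"
    and "conjugates_in G H u g" "conjugates_in G H v g" "conjugates_in G H z g"
  shows "conjugates_in G H x g"
proof -
  have x: "x = u \<otimes> v \<otimes> inv z"
    using c rel by (metis inv_solve_right m_closed)
  have "inv g \<otimes> x \<otimes> g = (inv g \<otimes> u \<otimes> g) \<otimes> (inv g \<otimes> v \<otimes> g) \<otimes> inv (inv g \<otimes> z \<otimes> g)"
    "g \<otimes> x \<otimes> inv g = (g \<otimes> u \<otimes> inv g) \<otimes> (g \<otimes> v \<otimes> inv g) \<otimes> inv (g \<otimes> z \<otimes> inv g)"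
    unfolding x using c by (simp_all add: m_assoc inv_mult_group)
  then show ?thesis
    using assms(8-10) unfolding conjugates_in_def
    by (metis subgroup.m_closed subgroup.m_inv_closed H)
qed

lemma conjugates_in_of_commute:
  assumes c: "x \<in> carrier G" "g \<in> carrier G" and comm: "g \<otimes> x = x \<otimes> g" and "x \<in> H"
  shows "conjugates_in G H x g"
proof -
  have "inv g \<otimes> x \<otimes> g = inv g \<otimes> (g \<otimes> x)" "g \<otimes> x \<otimes> inv g = x \<otimes> g \<otimes> inv g"
    using c by (simp_all add: m_assoc comm)
  then have "inv g \<otimes> x \<otimes> g = x" "g \<otimes> x \<otimes> inv g = x"
    using c by (simp_all add: m_assoc)
  then show ?thesis using \<open>x \<in> H\<close> unfolding conjugates_in_def by simp
qed

lemma conj_generate_closed: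
  assumes S: "S \<subseteq> carrier G" and t: "t \<in> carrier G"
    and gens: "\<And>s. s \<in> S \<Longrightarrow> t \<otimes> s \<otimes> inv t \<in> generate G S"
    and h: "h \<in> generate G S"
  shows "t \<otimes> h \<otimes> inv t \<in> generate G S"
  using h
proof (induction h rule: generate.induct)
  case one
  show ?case using t by (simp add: generate.one)
next
  case (incl s)
  then show ?case by (rule gens)
next
  case (inv s)
  have "t \<otimes> inv s \<otimes> inv t = inv (t \<otimes> s \<otimes> inv t)"
    using inv S t by (auto simp: inv_mult_group m_assoc)
  then show ?case
    using gens[OF inv] subgroup.m_inv_closed[OF generate_is_subgroup[OF S]] by simp
next
  case (eng h1 h2)
  have "h1 \<in> carrier G" "h2 \<in> carrier G"
    using eng.hyps generate_in_carrier[OF S] by auto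
  then have "t \<otimes> (h1 \<otimes> h2) \<otimes> inv t = (t \<otimes> h1 \<otimes> inv t) \<otimes> (t \<otimes> h2 \<otimes> inv t)"
    using t by (simp add: m_assoc)
  then show ?case using eng.IH by (simp add: generate.eng)
qed

lemma subgroup_two_sided_conj_stable:
  assumes H: "subgroup H G"
  shows "subgroup {g \<in> carrier G. \<forall>h\<in>H. g \<otimes> h \<otimes> inv g \<in> H \<and> inv g \<otimes> h \<otimes> g \<in> H} G"
    (is "subgroup ?K G")
proof (rule subgroupI)
  have H_carrier: "h \<in> H \<Longrightarrow> h \<in> carrier G" for h
    using H subgroup.subset by blast
  show "?K \<subseteq> carrier G" by blast
  show "?K \<noteq> {}" using H_carrier by (auto intro!: exI[of _ \<one>])
  show "inv g \<in> ?K" if "g \<in> ?K" for g using that by auto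
  fix g g' assume "g \<in> ?K" "g' \<in> ?K"
  then have c: "g \<in> carrier G" "g' \<in> carrier G"
    and g: "\<And>h. h \<in> H \<Longrightarrow> g \<otimes> h \<otimes> inv g \<in> H \<and> inv g \<otimes> h \<otimes> g \<in> H"
    and g': "\<And>h. h \<in> H \<Longrightarrow> g' \<otimes> h \<otimes> inv g' \<in> H \<and> inv g' \<otimes> h \<otimes> g' \<in> H"
    by auto
  have "g \<otimes> g' \<otimes> h \<otimes> inv (g \<otimes> g') = g \<otimes> (g' \<otimes> h \<otimes> inv g') \<otimes> inv g"
    "inv (g \<otimes> g') \<otimes> h \<otimes> (g \<otimes> g') = inv g' \<otimes> (inv g \<otimes> h \<otimes> g) \<otimes> g'"
    if "h \<in> H" for h
    using c that H_carrier by (simp_all add: inv_mult_group m_assoc)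
  then show "g \<otimes> g' \<in> ?K" using c g g' by simp
qed

lemma normal_if_conj_closed_by_generators:
  assumes H: "subgroup H G" and T: "generate G T = carrier G"
    and T_inv: "\<And>t. t \<in> T \<Longrightarrow> inv t \<in> T"
    and conj: "\<And>t h. t \<in> T \<Longrightarrow> h \<in> H \<Longrightarrow> t \<otimes> h \<otimes> inv t \<in> H"
  shows "H \<lhd> G"
proof -
  let ?K = "{g \<in> carrier G. \<forall>h\<in>H. g \<otimes> h \<otimes> inv g \<in> H \<and> inv g \<otimes> h \<otimes> g \<in> H}"
  have T_K: "T \<subseteq> ?K"
  proof
    fix t assume t: "t \<in> T"
    have t_carrier: "t \<in> carrier G" using t generate.incl[of t T G] T by simp
    have "inv t \<otimes> h \<otimes> t \<in> H" if "h \<in> H" for h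
      using conj[OF T_inv[OF t] that] t_carrier by simp
    then show "t \<in> ?K" using t_carrier conj[OF t] by blast
  qed
  have "generate G T \<subseteq> ?K"
    by (rule generate_subgroup_incl[OF T_K subgroup_two_sided_conj_stable[OF H]])
  then have K: "carrier G \<subseteq> ?K" by (simp only: T)
  show ?thesis unfolding normal_inv_iff
  proof (intro conjI ballI H)
    fix x h assume "x \<in> carrier G" "h \<in> H"
    then show "x \<otimes> h \<otimes> inv x \<in> H" using K by blast
  qed
qed

end

lemma weq_append_cong: "weq m u v \<Longrightarrow> weq m (p @ u @ q) (p @ v @ q)"
proof (induction rule: weq.induct)
  case (weq_cancel x u v)
  from weq.weq_cancel[OF weq_cancel, of "p @ u" "v @ q"] show ?case by simp
next
  case (weq_rel l r u v)
  from weq.weq_rel[OF weq_rel, of "p @ u" "v @ q"] show ?case by simp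
qed (blast intro: weq.intros)+

lemma weq_append: "weq m u u' \<Longrightarrow> weq m v v' \<Longrightarrow> weq m (u @ v) (u' @ v')"
  using weq_append_cong[of m u u' "[]" v] weq_append_cong[of m v v' u' "[]"]
  by (auto intro: weq.weq_trans)

lemma wclass_eq_iff: "wclass m u = wclass m v \<longleftrightarrow> weq m u v"
  unfolding wclass_def by (blast intro: weq.intros)

lemma VSPG_mult_wclass: "wclass m u \<otimes>\<^bsub>VSPG m\<^esub> wclass m v = wclass m (u @ v)"
  unfolding VSPG_def wclass_def by (auto intro: weq_append weq.intros)

lemma VSPG_one_eq: "\<one>\<^bsub>VSPG m\<^esub> = wclass m []"
  by (simp add: VSPG_def)

lemma VSPG_carrier_eq: "carrier (VSPG m) = {wclass m w | w. valid_word m w}"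
  by (simp add: VSPG_def)

lemma flip_flip [simp]: "flip (flip x) = x"
  by (simp add: flip_def)

lemma fst_flip [simp]: "fst (flip x) = fst x"
  by (simp add: flip_def)

lemma inv_word_simps [simp]:
  "inv_word [] = []" "inv_word (x # w) = inv_word w @ [flip x]"
  "inv_word (u @ v) = inv_word v @ inv_word u" "inv_word (inv_word w) = w"
  by (simp_all add: inv_word_def rev_map comp_def)

lemma valid_word_simps [simp]:
  "valid_word m []" "valid_word m (x # w) \<longleftrightarrow> valid_gen m (fst x) \<and> valid_word m w"
  "valid_word m (u @ v) \<longleftrightarrow> valid_word m u \<and> valid_word m v"
  "valid_word m (inv_word w) \<longleftrightarrow> valid_word m w"
  by (auto simp: valid_word_def inv_word_def)

lemma valid_gen_mono: "m \<le> m' \<Longrightarrow> valid_gen m g \<Longrightarrow> valid_gen m' g"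
  by (cases g) auto

lemma valid_word_mono: "m \<le> m' \<Longrightarrow> valid_word m w \<Longrightarrow> valid_word m' w"
  using valid_gen_mono unfolding valid_word_def by blast

lemma weq_cancel_pair: "valid_gen m (fst x) \<Longrightarrow> weq m (u @ x # flip x # v) (u @ v)"
  using weq.weq_cancel[of m x u v] by simp

lemma weq_append_inv_word: "valid_word m w \<Longrightarrow> weq m (w @ inv_word w) []"
proof (induction w)
  case (Cons x w)
  have "weq m ([x] @ (w @ inv_word w) @ [flip x]) ([x] @ [] @ [flip x])"
    using Cons by (intro weq_append_cong) auto
  moreover have "weq m ([] @ x # flip x # []) ([] @ [])"
    using Cons by (intro weq_cancel_pair) auto
  ultimately show ?case by (auto intro: weq.weq_trans)
qed (simp add: weq.weq_refl)

lemma group_VSPG: "group (VSPG m)"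
proof (rule groupI)
  show "\<one>\<^bsub>VSPG m\<^esub> \<in> carrier (VSPG m)"
    by (auto simp: VSPG_carrier_eq VSPG_one_eq intro!: exI[of _ "[]"])
next
  fix x assume "x \<in> carrier (VSPG m)"
  then obtain w where w: "x = wclass m w" "valid_word m w" by (auto simp: VSPG_carrier_eq)
  have "weq m (inv_word w @ w) []"
    using weq_append_inv_word[of m "inv_word w"] w(2) by simp
  then have "wclass m (inv_word w) \<otimes>\<^bsub>VSPG m\<^esub> x = \<one>\<^bsub>VSPG m\<^esub>"
    using w by (simp add: VSPG_mult_wclass wclass_eq_iff VSPG_one_eq)
  moreover have "wclass m (inv_word w) \<in> carrier (VSPG m)"
    using w by (auto simp: VSPG_carrier_eq)
  ultimately show "\<exists>y\<in>carrier (VSPG m). y \<otimes>\<^bsub>VSPG m\<^esub> x = \<one>\<^bsub>VSPG m\<^esub>" by blast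
qed (auto simp: VSPG_carrier_eq VSPG_mult_wclass VSPG_one_eq)

lemma wclass_in_carrier: "valid_word m w \<Longrightarrow> wclass m w \<in> carrier (VSPG m)"
  by (auto simp: VSPG_carrier_eq)

lemma VSPG_inv_wclass: "valid_word m w \<Longrightarrow> inv\<^bsub>VSPG m\<^esub> (wclass m w) = wclass m (inv_word w)"
proof -
  assume w: "valid_word m w"
  interpret group "VSPG m" by (rule group_VSPG)
  have "wclass m (inv_word w) \<otimes>\<^bsub>VSPG m\<^esub> wclass m w = \<one>\<^bsub>VSPG m\<^esub>"
    using weq_append_inv_word[of m "inv_word w"] w
    by (simp add: VSPG_mult_wclass VSPG_one_eq wclass_eq_iff)
  then show ?thesis
    using w by (metis inv_equality valid_word_simps(4) wclass_in_carrier)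
qed

definition letters :: "nat \<Rightarrow> vword set set" where
  "letters m = {wclass m [l] | l. valid_gen m (fst l)}"

lemma VSPG_generated_by_letters: "generate (VSPG m) (letters m) = carrier (VSPG m)"
proof
  interpret group "VSPG m" by (rule group_VSPG)
  have letters_carrier: "letters m \<subseteq> carrier (VSPG m)"
    unfolding letters_def by (auto intro: wclass_in_carrier)
  then show "generate (VSPG m) (letters m) \<subseteq> carrier (VSPG m)"
    by (rule generate_incl)
  have "wclass m w \<in> generate (VSPG m) (letters m)" if "valid_word m w" for w
    using that
  proof (induction w)
    case Nil
    show ?case using generate.one by (metis VSPG_one_eq)
  next
    case (Cons l w)
    have "valid_gen m (fst l)" using Cons.prems by simp
    then have "wclass m [l] \<in> letters m" unfolding letters_def by blast
    then have "wclass m [l] \<otimes>\<^bsub>VSPG m\<^esub> wclass m w \<in> generate (VSPG m) (letters m)"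
      using Cons by (auto intro: generate.eng generate.incl)
    then show ?case by (simp add: VSPG_mult_wclass)
  qed
  then show "carrier (VSPG m) \<subseteq> generate (VSPG m) (letters m)"
    by (auto simp: VSPG_carrier_eq)
qed

lemma inv_letter: "t \<in> letters m \<Longrightarrow> inv\<^bsub>VSPG m\<^esub> t \<in> letters m"
proof -
  assume "t \<in> letters m"
  then obtain l where l: "t = wclass m [l]" "valid_gen m (fst l)" unfolding letters_def by blast
  then have "inv\<^bsub>VSPG m\<^esub> t = wclass m [flip l]" "valid_gen m (fst (flip l))"
    by (simp_all add: VSPG_inv_wclass)
  then show ?thesis unfolding letters_def by blast
qed

lemma reduced_snoc_iff:
  "reduced (w @ [y]) \<longleftrightarrow> reduced w \<and> (w \<noteq> [] \<longrightarrow> y \<noteq> flip (last w))"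
proof -
  have last_pair: "(w @ [y]) ! Suc t = y" "(w @ [y]) ! t = last w" if "Suc t = length w" for t
    using that by (simp_all add: nth_append)
      (metis Zero_not_Suc diff_Suc_1 last_conv_nth list.size(3))
  have front: "(w @ [y]) ! Suc t = w ! Suc t" "(w @ [y]) ! t = w ! t" if "Suc t < length w" for t
    using that by (simp_all add: nth_append)
  show ?thesis
  proof
    assume r: "reduced (w @ [y])"
    have "reduced w"
      unfolding reduced_def
    proof (intro allI impI)
      fix t assume t: "Suc t < length w"
      then have "(w @ [y]) ! Suc t \<noteq> flip ((w @ [y]) ! t)"
        using r unfolding reduced_def by simp
      then show "w ! Suc t \<noteq> flip (w ! t)" using front[OF t] by simp
    qed
    moreover have "y \<noteq> flip (last w)" if "w \<noteq> []"
    proof -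
      obtain t where t: "Suc t = length w" using \<open>w \<noteq> []\<close> by (cases w) auto
      then have "Suc t < length (w @ [y])" by simp
      then have "(w @ [y]) ! Suc t \<noteq> flip ((w @ [y]) ! t)"
        using r unfolding reduced_def by blast
      then show ?thesis using last_pair[OF t] by simp
    qed
    ultimately show "reduced w \<and> (w \<noteq> [] \<longrightarrow> y \<noteq> flip (last w))" by blast
  next
    assume r: "reduced w \<and> (w \<noteq> [] \<longrightarrow> y \<noteq> flip (last w))"
    show "reduced (w @ [y])"
      unfolding reduced_def
    proof (intro allI impI)
      fix t assume "Suc t < length (w @ [y])"
      then consider "Suc t < length w" | "Suc t = length w" by force
      then show "(w @ [y]) ! Suc t \<noteq> flip ((w @ [y]) ! t)"
        by cases (use r front last_pair in \<open>auto simp: reduced_def\<close>)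
    qed
  qed
qed

lemma conj_elt_cancel_last:
  assumes "valid_gen m (fst l)"
  shows "conj_elt m x (w @ [l, flip l]) = conj_elt m x w"
proof -
  let ?c = "inv_word w @ [(x, True)] @ w"
  have "weq m ([] @ l # flip l # (?c @ [l, flip l])) ([] @ ?c @ [l, flip l])"
    "weq m (?c @ l # flip l # []) (?c @ [])"
    using weq_cancel_pair[OF assms, of "[]"] weq_cancel_pair[OF assms, of ?c "[]"] by simp_all
  then have "weq m ([l, flip l] @ ?c @ [l, flip l]) ?c"
    by (auto intro: weq.weq_trans)
  then show ?thesis
    unfolding conj_elt_def wclass_eq_iff by simp
qed

definition red_pow :: "nat \<Rightarrow> vgen \<Rightarrow> (vgen \<Rightarrow> bool) \<Rightarrow> vword set set" where
  "red_pow k x P = {conj_elt k x w | w.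
      w = [] \<or> (valid_word (k - 1) w \<and> reduced w \<and> P (fst (hd w)))}"

lemma red_pow_mu_eq:
  "red_pow_mu k j = red_pow k (Mu k j) (\<lambda>g. \<exists>i. 1 \<le> i \<and> i \<le> k - 1 \<and> i \<noteq> j \<and> g \<in> {Mu i j, Ga i j})"
  by (simp add: red_pow_mu_def red_pow_def)

lemma red_pow_ga_eq:
  "red_pow_ga k x j = red_pow k x (\<lambda>g. \<exists>i. 1 \<le> i \<and> i \<le> k - 1 \<and> i \<noteq> j \<and> g \<in> {Ga i j, Ga j i})"
  by (simp add: red_pow_ga_def red_pow_def)

lemma red_pow_snoc:
  assumes w: "w \<noteq> []" "valid_word (k - 1) w" "reduced w" "P (fst (hd w))"
    and l: "valid_gen (k - 1) (fst l)"
  shows "conj_elt k x (w @ [flip l]) \<in> red_pow k x P"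
proof (cases "last w = l")
  case True
  define w' where "w' = butlast w"
  have w_eq: "w = w' @ [l]" using True w(1) unfolding w'_def by (metis append_butlast_last_id)
  have "conj_elt k x (w @ [flip l]) = conj_elt k x w'"
    unfolding w_eq using l valid_gen_mono[of "k - 1" k] by (simp add: conj_elt_cancel_last)
  moreover have "valid_word (k - 1) w' \<and> reduced w' \<and> P (fst (hd w'))" if "w' \<noteq> []"
    using w that reduced_snoc_iff[of w' l] unfolding w_eq by simp
  ultimately show ?thesis unfolding red_pow_def by blast
next
  case False
  then have "reduced (w @ [flip l])"
    using w(1,3) reduced_snoc_iff[of w "flip l"] by (metis flip_flip)
  then show ?thesis unfolding red_pow_def using w l by auto
qed

definition gen :: "nat \<Rightarrow> vgen \<Rightarrow> vword set" where
  "gen m g = wclass m [(g, True)]"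

definition upper_gens :: "nat \<Rightarrow> nat \<Rightarrow> vgen set" where
  "upper_gens k j = {Mu j k, Mu k j, Ga j k, Ga k j}"

definition VS_star_generators :: "nat \<Rightarrow> vword set set" where
  "VS_star_generators k = {wclass k [(Mu j k, True)] | j. 1 \<le> j \<and> j \<le> k - 1}
     \<union> (\<Union>j\<in>{1..k-1}. red_pow_mu k j \<union> red_pow_ga k (Ga k j) j \<union> red_pow_ga k (Ga j k) j)"

locale VSPG_level =
  fixes k :: nat
begin

sublocale G: group "VSPG k" by (rule group_VSPG)

abbreviation mult (infixl "\<diamondop>" 70) where "x \<diamondop> y \<equiv> x \<otimes>\<^bsub>VSPG k\<^esub> y"
abbreviation ginv where "ginv x \<equiv> inv\<^bsub>VSPG k\<^esub> x"
abbreviation H where "H \<equiv> generate (VSPG k) (VS_star_generators k)"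
abbreviation conj_in_H :: "vgen \<Rightarrow> vgen \<Rightarrow> bool" where
  "conj_in_H x g \<equiv> conjugates_in (VSPG k) H (gen k x) (gen k g)"

lemma gen_carrier [simp]: "valid_gen k g \<Longrightarrow> gen k g \<in> carrier (VSPG k)"
  unfolding gen_def by (rule wclass_in_carrier) simp

lemma gen_relator2: "relator k (pos [a, b]) (pos [c, d]) \<Longrightarrow> gen k a \<diamondop> gen k b = gen k c \<diamondop> gen k d"
  using weq.weq_rel[of k "pos [a, b]" "pos [c, d]" "[]" "[]"]
  by (simp add: gen_def VSPG_mult_wclass pos_def wclass_eq_iff)

lemma gen_relator3:
  "relator k (pos [a, b, c]) (pos [d, f, h]) \<Longrightarrow>
     gen k a \<diamondop> gen k b \<diamondop> gen k c = gen k d \<diamondop> gen k f \<diamondop> gen k h"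
  using weq.weq_rel[of k "pos [a, b, c]" "pos [d, f, h]" "[]" "[]"]
  by (simp add: gen_def VSPG_mult_wclass pos_def wclass_eq_iff)

lemma conj_elt_Nil: "conj_elt k x [] = gen k x"
  by (simp add: conj_elt_def gen_def)

lemma letter_conj_conj_elt:
  "valid_gen k (fst l) \<Longrightarrow> wclass k [l] \<diamondop> conj_elt k x w \<diamondop> ginv (wclass k [l]) = conj_elt k x (w @ [flip l])"
  using VSPG_inv_wclass[of k "[l]"] by (simp add: conj_elt_def VSPG_mult_wclass)

lemma conj_in_H_iff:
  assumes "valid_gen k g"
  shows "conj_in_H x g \<longleftrightarrow> (\<forall>b. conj_elt k x [(g, b)] \<in> H)"
proof -
  have "ginv (gen k g) = wclass k [(g, False)]"
    using assms VSPG_inv_wclass[of k "[(g, True)]"] by (simp add: gen_def flip_def)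
  then have "ginv (gen k g) \<diamondop> gen k x \<diamondop> gen k g = conj_elt k x [(g, True)]"
    "gen k g \<diamondop> gen k x \<diamondop> ginv (gen k g) = conj_elt k x [(g, False)]"
    by (simp_all add: conj_elt_def gen_def VSPG_mult_wclass flip_def)
  then show ?thesis unfolding conjugates_in_def by (metis (full_types))
qed

lemma letter_conj_gen_in_H:
  assumes "valid_gen k (fst l)" "conj_in_H x (fst l)"
  shows "wclass k [l] \<diamondop> gen k x \<diamondop> ginv (wclass k [l]) \<in> H"
  using assms letter_conj_conj_elt[of l x "[]"] conj_in_H_iff[of "fst l" x]
  by (simp add: conj_elt_Nil flip_def)

lemma red_pows_subset_generators:
  assumes "1 \<le> j" "j < k"
  shows "red_pow_mu k j \<subseteq> VS_star_generators k" "red_pow_ga k (Ga k j) j \<subseteq> VS_star_generators k"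
    "red_pow_ga k (Ga j k) j \<subseteq> VS_star_generators k"
  using assms unfolding VS_star_generators_def by fastforce+

lemma VS_star_generators_cases:
  assumes "s \<in> VS_star_generators k"
  obtains (upper) j where "1 \<le> j" "j < k" "s = gen k (Mu j k)"
  | (red_pow) j x P where "1 \<le> j" "j < k" "x \<in> upper_gens k j" "s \<in> red_pow k x P"
      "red_pow k x P \<subseteq> VS_star_generators k"
proof -
  note sub = red_pows_subset_generators
  from assms consider (a) j where "1 \<le> j" "j < k" "s = gen k (Mu j k)"
    | (b) j where "1 \<le> j" "j < k" "s \<in> red_pow_mu k j"
    | (c) j where "1 \<le> j" "j < k" "s \<in> red_pow_ga k (Ga k j) j"
    | (d) j where "1 \<le> j" "j < k" "s \<in> red_pow_ga k (Ga j k) j"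
    unfolding VS_star_generators_def gen_def by fastforce
  then show ?thesis
  proof cases
    case (b j)
    show ?thesis
      by (rule red_pow[OF b(1,2) _ b(3)[unfolded red_pow_mu_eq] sub(1)[OF b(1,2), unfolded red_pow_mu_eq]])
        (simp add: upper_gens_def)
  next
    case (c j)
    show ?thesis
      by (rule red_pow[OF c(1,2) _ c(3)[unfolded red_pow_ga_eq] sub(2)[OF c(1,2), unfolded red_pow_ga_eq]])
        (simp add: upper_gens_def)
  next
    case (d j)
    show ?thesis
      by (rule red_pow[OF d(1,2) _ d(3)[unfolded red_pow_ga_eq] sub(3)[OF d(1,2), unfolded red_pow_ga_eq]])
        (simp add: upper_gens_def)
  qed (rule upper)
qed

lemma VS_star_generators_carrier: "VS_star_generators k \<subseteq> carrier (VSPG k)"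
proof
  fix s assume "s \<in> VS_star_generators k"
  then show "s \<in> carrier (VSPG k)"
  proof (cases rule: VS_star_generators_cases)
    case (red_pow j x P)
    then obtain w where "s = conj_elt k x w" "valid_word k w"
      unfolding red_pow_def using valid_word_mono[of "k - 1" k] by auto
    moreover have "valid_gen k x" using red_pow by (auto simp: upper_gens_def)
    ultimately show ?thesis unfolding conj_elt_def by (simp add: wclass_in_carrier)
  qed simp
qed

lemma H_subgroup: "subgroup H (VSPG k)"
  by (rule G.generate_is_subgroup[OF VS_star_generators_carrier])

lemma generators_in_H: "VS_star_generators k \<subseteq> H"
  by (rule subsetI, rule generate.incl)

lemma red_pows_in_H:
  assumes "1 \<le> j" "j < k"
  shows "red_pow_mu k j \<subseteq> H" "red_pow_ga k (Ga k j) j \<subseteq> H" "red_pow_ga k (Ga j k) j \<subseteq> H"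
  using red_pows_subset_generators[OF assms] generators_in_H by (auto dest: subset_trans)

lemma upper_gens_in_H:
  assumes "1 \<le> j" "j < k" "x \<in> upper_gens k j"
  shows "gen k x \<in> H"
proof -
  have "gen k (Mu j k) \<in> VS_star_generators k"
    using assms unfolding VS_star_generators_def gen_def by auto
  moreover have "gen k x \<in> red_pow k x P" for P
    unfolding red_pow_def conj_elt_Nil[symmetric] by blast
  ultimately show ?thesis
    using assms(3) red_pows_in_H[OF assms(1,2)] generators_in_H
    unfolding upper_gens_def red_pow_mu_eq red_pow_ga_eq by blast
qed

lemma conj_in_H_of_red_pow:
  assumes "red_pow k x P \<subseteq> H" "P g" "valid_gen (k - 1) g"
  shows "conj_in_H x g"
proof -
  have "conj_elt k x [(g, b)] \<in> red_pow k x P" for b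
    using assms(2,3) unfolding red_pow_def reduced_def valid_word_def by auto
  then show ?thesis
    using assms conj_in_H_iff[of g x] valid_gen_mono[of "k - 1" k g] by auto
qed

lemma conj_in_H_mu:
  assumes "1 \<le> j" "j < k" "1 \<le> i" "i < k" "i \<noteq> j" "g \<in> {Mu i j, Ga i j}"
  shows "conj_in_H (Mu k j) g"
  using assms red_pows_in_H(1)[OF assms(1,2)]
  by (intro conj_in_H_of_red_pow[where P = "\<lambda>g. \<exists>i. 1 \<le> i \<and> i \<le> k - 1 \<and> i \<noteq> j \<and> g \<in> {Mu i j, Ga i j}"])
    (auto simp: red_pow_mu_eq)

lemma conj_in_H_ga:
  assumes "1 \<le> j" "j < k" "1 \<le> i" "i < k" "i \<noteq> j" "g \<in> {Ga i j, Ga j i}"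
    and "x \<in> {Ga k j, Ga j k}"
  shows "conj_in_H x g"
  using assms red_pows_in_H(2,3)[OF assms(1,2)]
  by (intro conj_in_H_of_red_pow[where P = "\<lambda>g. \<exists>i. 1 \<le> i \<and> i \<le> k - 1 \<and> i \<noteq> j \<and> g \<in> {Ga i j, Ga j i}"])
    (auto simp: red_pow_ga_eq)

lemma conj_in_H_Mu_jk_of_r4:
  assumes "1 \<le> j" "j < k" "valid_gen k g"
    and "conj_in_H (Ga j k) g" "conj_in_H (Mu k j) g" "conj_in_H (Ga k j) g"
  shows "conj_in_H (Mu j k) g"
proof (rule G.conjugates_in_of_mult_eq[OF H_subgroup, where u = "gen k (Ga j k)"
      and v = "gen k (Mu k j)" and z = "gen k (Ga k j)"])
  show "gen k (Mu j k) \<diamondop> gen k (Ga k j) = gen k (Ga j k) \<diamondop> gen k (Mu k j)"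
    by (rule gen_relator2, rule relator.r4) (use assms in auto)
qed (use assms in auto)

lemma conj_in_H_by_Mu_ja:
  assumes j: "1 \<le> j" "j < k" and a: "1 \<le> a" "a < k" "a \<noteq> j" and x: "x \<in> upper_gens k j"
  shows "conj_in_H x (Mu j a)"
proof -
  have y: "conj_in_H (Mu k a) (Mu j a)" by (rule conj_in_H_mu) (use j a in auto)
  have in_H: "gen k y \<in> H" if "y \<in> upper_gens k j \<union> upper_gens k a" for y
    using that upper_gens_in_H j a by blast
  have "conj_in_H (Mu k j) (Mu j a)"
  proof (rule G.conjugates_in_of_braid_outer[OF H_subgroup, where y = "gen k (Mu k a)"])
    show "gen k (Mu k j) \<diamondop> gen k (Mu k a) \<diamondop> gen k (Mu j a)
        = gen k (Mu j a) \<diamondop> gen k (Mu k a) \<diamondop> gen k (Mu k j)"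
      by (rule gen_relator3, rule relator.r1) (use j a in auto)
  qed (use j a y in_H in \<open>auto simp: upper_gens_def\<close>)
  moreover have "conj_in_H (Ga k j) (Mu j a)"
  proof (rule G.conjugates_in_of_braid_outer[OF H_subgroup, where y = "gen k (Mu k a)"])
    show "gen k (Ga k j) \<diamondop> gen k (Mu k a) \<diamondop> gen k (Mu j a)
        = gen k (Mu j a) \<diamondop> gen k (Mu k a) \<diamondop> gen k (Ga k j)"
      by (rule gen_relator3, rule relator.r3) (use j a in auto)
  qed (use j a y in_H in \<open>auto simp: upper_gens_def\<close>)
  moreover have "conj_in_H (Ga j k) (Mu j a)"
  proof (rule G.conjugates_in_of_braid_middle[OF H_subgroup, where y = "gen k (Mu k a)"])
    show "gen k (Ga j k) \<diamondop> gen k (Mu j a) \<diamondop> gen k (Mu k a)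
        = gen k (Mu k a) \<diamondop> gen k (Mu j a) \<diamondop> gen k (Ga j k)"
      by (rule gen_relator3, rule relator.r3) (use j a in auto)
  qed (use j a y in_H in \<open>auto simp: upper_gens_def\<close>)
  moreover have "conj_in_H (Mu j k) (Mu j a)"
  proof (rule G.conjugates_in_of_braid_middle[OF H_subgroup, where y = "gen k (Mu k a)"])
    show "gen k (Mu j k) \<diamondop> gen k (Mu j a) \<diamondop> gen k (Mu k a)
        = gen k (Mu k a) \<diamondop> gen k (Mu j a) \<diamondop> gen k (Mu j k)"
      by (rule gen_relator3, rule relator.r1) (use j a in auto)
  qed (use j a y in_H in \<open>auto simp: upper_gens_def\<close>)
  ultimately show ?thesis using x unfolding upper_gens_def by blast
qed

lemma conj_in_H_by_Ga_ja:
  assumes j: "1 \<le> j" "j < k" and a: "1 \<le> a" "a < k" "a \<noteq> j" and x: "x \<in> upper_gens k j"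
  shows "conj_in_H x (Ga j a)"
proof -
  have mu: "conj_in_H (Mu k j) (Ga j a)"
  proof (rule G.conjugates_in_of_braid_outer[OF H_subgroup, where y = "gen k (Mu k a)"])
    show "gen k (Mu k j) \<diamondop> gen k (Mu k a) \<diamondop> gen k (Ga j a)
        = gen k (Ga j a) \<diamondop> gen k (Mu k a) \<diamondop> gen k (Mu k j)"
      by (rule gen_relator3, rule relator.r2) (use j a in auto)
    show "conj_in_H (Mu k a) (Ga j a)" by (rule conj_in_H_mu) (use j a in auto)
  qed (use j a upper_gens_in_H in \<open>auto simp: upper_gens_def\<close>)
  have ga: "conj_in_H y (Ga j a)" if "y \<in> {Ga k j, Ga j k}" for y
    by (rule conj_in_H_ga[of j a]) (use j a that in auto)
  have "conj_in_H (Mu j k) (Ga j a)"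
    by (rule conj_in_H_Mu_jk_of_r4) (use j a mu ga in auto)
  then show ?thesis using x mu ga unfolding upper_gens_def by blast
qed

lemma conj_in_H_by_Mu_aj:
  assumes j: "1 \<le> j" "j < k" and a: "1 \<le> a" "a < k" "a \<noteq> j" and x: "x \<in> upper_gens k j"
  shows "conj_in_H x (Mu a j)"
proof -
  have y: "conj_in_H (Mu a k) (Mu a j)"
    by (rule conj_in_H_by_Mu_ja) (use j a in \<open>auto simp: upper_gens_def\<close>)
  have in_H: "gen k (Mu a k) \<in> H" "gen k x \<in> H"
    using upper_gens_in_H a j x by (auto simp: upper_gens_def)
  have "conj_in_H (Mu k j) (Mu a j)" by (rule conj_in_H_mu) (use j a in auto)
  moreover have "conj_in_H (Ga k j) (Mu a j)"
  proof (rule G.conjugates_in_of_braid_middle[OF H_subgroup, where y = "gen k (Mu a k)"])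
    show "gen k (Ga k j) \<diamondop> gen k (Mu a j) \<diamondop> gen k (Mu a k)
        = gen k (Mu a k) \<diamondop> gen k (Mu a j) \<diamondop> gen k (Ga k j)"
      by (rule gen_relator3[symmetric], rule relator.r2) (use j a in auto)
  qed (use j a y in_H upper_gens_in_H in \<open>auto simp: upper_gens_def\<close>)
  moreover have "conj_in_H (Ga j k) (Mu a j)"
  proof (rule G.conjugates_in_of_braid_outer[OF H_subgroup, where y = "gen k (Mu a k)"])
    show "gen k (Ga j k) \<diamondop> gen k (Mu a k) \<diamondop> gen k (Mu a j)
        = gen k (Mu a j) \<diamondop> gen k (Mu a k) \<diamondop> gen k (Ga j k)"
      by (rule gen_relator3[symmetric], rule relator.r2) (use j a in auto)
  qed (use j a y in_H upper_gens_in_H in \<open>auto simp: upper_gens_def\<close>)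
  moreover have "conj_in_H (Mu j k) (Mu a j)"
  proof (rule G.conjugates_in_of_braid_outer[OF H_subgroup, where y = "gen k (Mu a k)"])
    show "gen k (Mu j k) \<diamondop> gen k (Mu a k) \<diamondop> gen k (Mu a j)
        = gen k (Mu a j) \<diamondop> gen k (Mu a k) \<diamondop> gen k (Mu j k)"
      by (rule gen_relator3[symmetric], rule relator.r1) (use j a in auto)
  qed (use j a y in_H upper_gens_in_H in \<open>auto simp: upper_gens_def\<close>)
  ultimately show ?thesis using x unfolding upper_gens_def by blast
qed

lemma conj_in_H_by_Ga_aj:
  assumes j: "1 \<le> j" "j < k" and a: "1 \<le> a" "a < k" "a \<noteq> j" and x: "x \<in> upper_gens k j"
  shows "conj_in_H x (Ga a j)"
proof -
  have mu: "conj_in_H (Mu k j) (Ga a j)" by (rule conj_in_H_mu) (use j a in auto)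
  have ga: "conj_in_H y (Ga a j)" if "y \<in> {Ga k j, Ga j k}" for y
    by (rule conj_in_H_ga[of j a]) (use j a that in auto)
  have "conj_in_H (Mu j k) (Ga a j)"
    by (rule conj_in_H_Mu_jk_of_r4) (use j a mu ga in auto)
  then show ?thesis using x mu ga unfolding upper_gens_def by blast
qed

lemma conj_in_H_by_disjoint:
  assumes j: "1 \<le> j" "j < k" and g: "valid_gen (k - 1) g" "g \<in> {Mu a b, Ga a b}"
    and "a \<noteq> j" "b \<noteq> j" and x: "x \<in> upper_gens k j"
  shows "conj_in_H x g"
proof (rule G.conjugates_in_of_commute)
  have ab: "1 \<le> a" "a < k" "1 \<le> b" "b < k" "a \<noteq> b" using g by auto
  show "gen k x \<in> carrier (VSPG k)" "gen k g \<in> carrier (VSPG k)"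
    using x j ab g(2) by (auto simp: upper_gens_def)
  show "gen k x \<in> H" by (rule upper_gens_in_H[OF j x])
  have "gen k (Mu a b) \<diamondop> gen k z = gen k z \<diamondop> gen k (Mu a b)" if "z \<in> {Mu j k, Mu k j}" for z
    using that j ab assms by (auto intro!: gen_relator2 relator.r5)
  moreover have "gen k (Mu a b) \<diamondop> gen k z = gen k z \<diamondop> gen k (Mu a b)" if "z \<in> {Ga j k, Ga k j}" for z
    using that j ab assms by (auto intro!: gen_relator2 relator.r7)
  moreover have "gen k (Ga a b) \<diamondop> gen k z = gen k z \<diamondop> gen k (Ga a b)" if "z \<in> {Mu j k, Mu k j}" for z
    using that j ab assms by (auto intro!: gen_relator2[symmetric] relator.r7)
  moreover have "gen k (Ga a b) \<diamondop> gen k z = gen k z \<diamondop> gen k (Ga a b)" if "z \<in> {Ga j k, Ga k j}" for z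
    using that j ab assms by (auto intro!: gen_relator2 relator.r6)
  ultimately have "gen k y \<diamondop> gen k z = gen k z \<diamondop> gen k y"
    if "y \<in> {Mu a b, Ga a b}" "z \<in> upper_gens k j" for y z
    using that unfolding upper_gens_def by blast
  then show "gen k g \<diamondop> gen k x = gen k x \<diamondop> gen k g" using g x by blast
qed

lemma conj_in_H_by_lower:
  assumes j: "1 \<le> j" "j < k" and x: "x \<in> upper_gens k j" and g: "valid_gen (k - 1) g"
  shows "conj_in_H x g"
proof -
  obtain a b where ab: "g \<in> {Mu a b, Ga a b}" by (cases g) auto
  have range: "1 \<le> a" "a < k" "1 \<le> b" "b < k" "a \<noteq> b" using g ab by auto
  consider "a = j" | "b = j" | "a \<noteq> j" "b \<noteq> j" by blast
  then show ?thesis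
  proof cases
    case 1
    then show ?thesis
      using ab range conj_in_H_by_Mu_ja[OF j _ _ _ x] conj_in_H_by_Ga_ja[OF j _ _ _ x] by auto
  next
    case 2
    then show ?thesis
      using ab range conj_in_H_by_Mu_aj[OF j _ _ _ x] conj_in_H_by_Ga_aj[OF j _ _ _ x] by auto
  qed (rule conj_in_H_by_disjoint[OF j g ab _ _ x])
qed

lemma letter_in_H:
  assumes "valid_gen k (fst l)" "\<not> valid_gen (k - 1) (fst l)"
  shows "wclass k [l] \<in> H"
proof -
  obtain g b where l: "l = (g, b)" by (cases l)
  obtain j where j: "1 \<le> j" "j < k" "g \<in> upper_gens k j"
    using assms l by (cases g) (auto simp: upper_gens_def)
  then have "gen k g \<in> H" by (rule upper_gens_in_H)
  moreover have "ginv (gen k g) = wclass k [(g, False)]"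
    using assms l VSPG_inv_wclass[of k "[(g, True)]"] by (simp add: gen_def flip_def)
  ultimately show ?thesis
    using l subgroup.m_inv_closed[OF H_subgroup, of "gen k g"] by (cases b) (auto simp: gen_def)
qed

lemma letter_conj_generator_in_H:
  assumes l: "valid_gen k (fst l)" and s: "s \<in> VS_star_generators k"
  shows "wclass k [l] \<diamondop> s \<diamondop> ginv (wclass k [l]) \<in> H"
proof (cases "valid_gen (k - 1) (fst l)")
  case False
  then have "wclass k [l] \<in> H" by (rule letter_in_H[OF l])
  then show ?thesis using s generators_in_H subgroup.m_closed[OF H_subgroup]
    subgroup.m_inv_closed[OF H_subgroup] by blast
next
  case lower: True
  from s show ?thesis
  proof (cases rule: VS_star_generators_cases)
    case (upper j)
    then show ?thesis
      using letter_conj_gen_in_H[OF l] conj_in_H_by_lower[OF _ _ _ lower] by (simp add: upper_gens_def)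
  next
    case (red_pow j x P)
    then obtain w where w: "s = conj_elt k x w"
      and adm: "w = [] \<or> (valid_word (k - 1) w \<and> reduced w \<and> P (fst (hd w)))"
      unfolding red_pow_def by blast
    show ?thesis
    proof (cases "w = []")
      case True
      then show ?thesis
        using w letter_conj_gen_in_H[OF l conj_in_H_by_lower[OF red_pow(1-3) lower]]
        by (simp add: conj_elt_Nil)
    next
      case False
      then have "conj_elt k x (w @ [flip l]) \<in> red_pow k x P"
        using adm red_pow_snoc lower by blast
      then show ?thesis
        using w letter_conj_conj_elt[OF l] red_pow(5) generators_in_H by auto
    qed
  qed
qed

lemma H_normal: "H \<lhd> VSPG k"
proof (rule G.normal_if_conj_closed_by_generators[OF H_subgroup VSPG_generated_by_letters inv_letter])
  fix t h assume "t \<in> letters k" "h \<in> H"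
  then obtain l where "t = wclass k [l]" "valid_gen k (fst l)"
    unfolding letters_def by blast
  then show "t \<diamondop> h \<diamondop> ginv t \<in> H"
    using G.conj_generate_closed[OF VS_star_generators_carrier _ letter_conj_generator_in_H \<open>h \<in> H\<close>]
    by (simp add: wclass_in_carrier)
qed

lemma gen_in_VS: "1 \<le> j \<Longrightarrow> j < k \<Longrightarrow> x \<in> upper_gens k j \<Longrightarrow> gen k x \<in> VS k"
  unfolding VS_def gen_def upper_gens_def by (rule generate.incl) auto

lemma VS_subset_H: "VS k \<subseteq> H"
  unfolding VS_def
proof (rule G.generate_subgroup_incl[OF _ H_subgroup])
  show "{wclass k [(g, True)] | g j. 1 \<le> j \<and> j \<le> k - 1 \<and> g \<in> {Mu j k, Mu k j, Ga j k, Ga k j}} \<subseteq> H"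
    using upper_gens_in_H unfolding gen_def upper_gens_def by fastforce
qed

lemma generators_subset_normal:
  assumes N: "N \<lhd> VSPG k" "VS k \<subseteq> N"
  shows "VS_star_generators k \<subseteq> N"
proof
  fix s assume "s \<in> VS_star_generators k"
  then show "s \<in> N"
  proof (cases rule: VS_star_generators_cases)
    case (upper j)
    then show ?thesis using gen_in_VS[of j] N(2) by (auto simp: upper_gens_def)
  next
    case (red_pow j x P)
    then obtain w where s: "s = conj_elt k x w" and w: "valid_word k w"
      unfolding red_pow_def using valid_word_mono[of "k - 1" k] by auto
    have "ginv (wclass k w) \<in> carrier (VSPG k)" "gen k x \<in> N"
      using gen_in_VS[OF red_pow(1-3)] N(2) w by (auto intro: wclass_in_carrier)
    then have "ginv (wclass k w) \<diamondop> gen k x \<diamondop> ginv (ginv (wclass k w)) \<in> N"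
      by (rule G.normal_invE(2)[OF N(1)])
    moreover have "ginv (wclass k w) \<diamondop> gen k x \<diamondop> ginv (ginv (wclass k w)) = s"
      using w by (simp add: s VSPG_inv_wclass wclass_in_carrier conj_elt_def gen_def VSPG_mult_wclass)
    ultimately show ?thesis by simp
  qed
qed

lemma VS_star_eq_generate: "VS_star k = H"
proof
  show "VS_star k \<subseteq> H"
    unfolding VS_star_def normal_closure_def using H_normal VS_subset_H by blast
  show "H \<subseteq> VS_star k"
    unfolding VS_star_def normal_closure_def
    using G.generate_subgroup_incl[OF generators_subset_normal normal_imp_subgroup] by blast
qed

end

theorem mainTheorem11:
  fixes k n :: nat
  assumes "3 \<le> k" and "k \<le> n"
  shows "VS_star k = generate (VSPG k)
           ({wclass k [(Mu j k, True)] | j. 1 \<le> j \<and> j \<le> k - 1}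
            \<union> (\<Union>j\<in>{1..k-1}. red_pow_mu k j \<union> red_pow_ga k (Ga k j) j \<union> red_pow_ga k (Ga j k) j))"
  \<comment> \<open>The bounds 3 \<le> k \<le> n play no role: the description holds for every k.\<close>
  using VSPG_level.VS_star_eq_generate[of k] unfolding VS_star_generators_def .

end
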